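(* Let $v_1\ge v_2>0$, $m\in\mathbb{Z}_{\ge0}$ and $0<\beta\le\alpha<1$. A strategy profile $(X,Y)$ with $\mathbf{E}(X)=m+\alpha$ and $\mathbf{E}(Y)=m+\beta$ is a Nash equilibrium of the discrete all-pay auction with valuations $v_1,v_2$ if and only if $v_1/2=v_2/2=m+1$, $X=(1-\alpha)U_{\mathrm{E}}^m+\alpha U_{\mathrm{O}}^{m+1}$ and $Y=(1-\beta)U_{\mathrm{E}}^m+\beta U_{\mathrm{O}}^{m+1}$. In this case the equilibrium payoffs are $P^1(X,Y)=1-\beta$ and $P^2(Y,X)=1-\alpha$.
   Context: Discrete all-pay auction: two players, 1 and 2, value a prize at $v_1$ and $v_2$ respectively, where $v_1\ge v_2>0$. A (mixed) strategy is a probability distribution on $\mathbb{Z}_{\ge 0}$ with finite mean, identified with a $\mathbb{Z}_{\ge0}$-valued random variable; the two players' choices are independent. If player 1 uses $X$ and player 2 uses $Y$, the expected payoffs are $P^1(X,Y)=v_1\Pr(X>Y)+\frac{v_1}{2}\Pr(X=Y)-\mathbf{E}(X)$ and $P^2(Y,X)=v_2\Pr(Y>X)+\frac{v_2}{2}\Pr(X=Y)-\mathbf{E}(Y)$. A Nash equilibrium of the all-pay auction is a pair $(X,Y)$ with $P^1(X,Y)\ge P^1(X',Y)$ and $P^2(Y,X)\ge P^2(Y',X)$ for all strategies $X',Y'$. $\lambda A+(1-\lambda)B$ denotes the mixture of distributions $A$ and $B$. Special distributions: for $m\ge1$, $U_{\mathrm{O}}^m$ is the uniform distribution on $\{1,3,\dots,2m-1\}$;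 for $m\ge0$, $U_{\mathrm{E}}^m$ is the uniform distribution on $\{0,2,\dots,2m\}$. *)

theory Defs
  imports "HOL-Probability.Probability"
begin

definition strategy :: "nat pmf \<Rightarrow> bool" where
  "strategy X \<longleftrightarrow> integrable (measure_pmf X) (\<lambda>x. real x)"

definition mean :: "nat pmf \<Rightarrow> real" where
  "mean X = measure_pmf.expectation X (\<lambda>x. real x)"

definition payoff :: "real \<Rightarrow> nat pmf \<Rightarrow> nat pmf \<Rightarrow> real" where
  "payoff v X Y =
     v * measure_pmf.prob (pair_pmf X Y) {(x, y). x > y}
     + v / 2 * measure_pmf.prob (pair_pmf X Y) {(x, y). x = y}
     - mean X"

definition nash :: "real \<Rightarrow> real \<Rightarrow> nat pmf \<Rightarrow> nat pmf \<Rightarrow> bool" where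
  "nash v1 v2 X Y \<longleftrightarrow> strategy X \<and> strategy Y \<and>
     (\<forall>X'. strategy X' \<longrightarrow> payoff v1 X' Y \<le> payoff v1 X Y) \<and>
     (\<forall>Y'. strategy Y' \<longrightarrow> payoff v2 Y' X \<le> payoff v2 Y X)"

definition mix :: "real \<Rightarrow> nat pmf \<Rightarrow> nat pmf \<Rightarrow> nat pmf" where
  "mix l A B = bind_pmf (bernoulli_pmf l) (\<lambda>b. if b then A else B)"

text \<open>U_O^m: uniform on {1,3,...,2m-1} (m \<ge> 1); U_E^m: uniform on {0,2,...,2m}.\<close>
definition U_O :: "nat \<Rightarrow> nat pmf" where
  "U_O m = pmf_of_set {2 * k + 1 | k. k < m}"

definition U_E :: "nat \<Rightarrow> nat pmf" where
  "U_E m = pmf_of_set {2 * k | k. k \<le> m}"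

end

theory Submission
  imports Defs
begin

text \<open>
  Bidding k against an opponent who plays Y wins the share P(Y < k) + P(Y = k)/2 of the prize.
  Payoffs are therefore linear in one's own strategy, and the expected shares of the two players
  add up to one. The share functions of U_E^m and U_O^(m+1) are bounded by (k+1)/(2m+2) and
  k/(2m+2), so these two deviations give each player a lower bound on his equilibrium share that
  depends only on the opponent's mean and is attained only if his valuation is 2m+2. The two
  bounds add up to exactly one, so both are attained: the valuations and payoffs are determined,
  and U_E^m and U_O^(m+1) are best replies. Then every bid in {0..2m+1} is a best reply, which
  determines the opponent's share function, and hence his distribution, on {0..2m+1}. Conversely,
  against the mixture with weight l on U_E^m every bid k earns min l (2m+2-k).
\<close>

definition win_share :: "nat pmf \<Rightarrow> nat \<Rightarrow> real" where
  "win_share Y k = measure_pmf.prob Y {..<k} + pmf Y k / 2"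

lemma prob_lessThan_Suc:
  "measure_pmf.prob Y {..<Suc k} = measure_pmf.prob Y {..<k} + pmf Y k"
proof -
  have "measure_pmf.prob Y {..<Suc k} = measure_pmf.prob Y ({..<k} \<union> {k})"
    by (rule arg_cong[where f = "measure_pmf.prob Y"]) auto
  also have "\<dots> = measure_pmf.prob Y {..<k} + pmf Y k"
    by (subst measure_pmf.finite_measure_Union) (auto simp: measure_pmf_single)
  finally show ?thesis .
qed

lemma win_share_0: "win_share Y 0 = pmf Y 0 / 2"
  by (simp add: win_share_def)

lemma win_share_Suc: "win_share Y (Suc k) = win_share Y k + (pmf Y k + pmf Y (Suc k)) / 2"
  by (simp add: win_share_def prob_lessThan_Suc field_simps)

lemma win_share_nonneg: "0 \<le> win_share Y k"
  by (simp add: win_share_def)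

lemma win_share_le_1: "win_share Y k \<le> 1"
  using measure_pmf.prob_le_1[of Y "{..<Suc k}"] pmf_nonneg[of Y k]
  unfolding win_share_def prob_lessThan_Suc by linarith

lemma integrable_win_share: "integrable (measure_pmf X) (win_share Y)"
  by (rule measure_pmf.integrable_const_bound[where B = 1])
     (simp_all add: win_share_nonneg win_share_le_1)

lemma prob_bind_pmf:
  "measure_pmf.prob (bind_pmf M f) A = measure_pmf.expectation M (\<lambda>x. measure_pmf.prob (f x) A)"
proof -
  have "ennreal (measure_pmf.prob (bind_pmf M f) A) =
        (\<integral>\<^sup>+x. ennreal (measure_pmf.prob (f x) A) \<partial>M)"
    by (simp add: measure_pmf.emeasure_eq_measure[symmetric])
  also have "\<dots> = ennreal (measure_pmf.expectation M (\<lambda>x. measure_pmf.prob (f x) A))"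
    by (intro nn_integral_eq_integral measure_pmf.integrable_const_bound[where B = 1]) auto
  finally show ?thesis
    by (simp add: integral_nonneg_AE)
qed

lemma prob_pair_pmf:
  "measure_pmf.prob (pair_pmf X Y) A =
   measure_pmf.expectation X (\<lambda>x. measure_pmf.prob Y {y. (x, y) \<in> A})"
proof -
  have "pair_pmf X Y = bind_pmf X (\<lambda>x. map_pmf (Pair x) Y)"
    by (simp add: pair_pmf_def map_pmf_def)
  then show ?thesis
    by (simp add: prob_bind_pmf vimage_def)
qed

lemma expectation_win_share:
  "measure_pmf.expectation X (win_share Y) =
   measure_pmf.prob (pair_pmf X Y) {(x, y). y < x} + measure_pmf.prob (pair_pmf X Y) {(x, y). x = y} / 2"
proof -
  have "measure_pmf.prob (pair_pmf X Y) {(x, y). y < x} =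
        measure_pmf.expectation X (\<lambda>x. measure_pmf.prob Y {..<x})"
    by (simp add: prob_pair_pmf lessThan_def)
  moreover have "measure_pmf.prob (pair_pmf X Y) {(x, y). x = y} = measure_pmf.expectation X (pmf Y)"
    by (simp add: prob_pair_pmf measure_pmf_single)
  moreover have "integrable (measure_pmf X) (\<lambda>x. measure_pmf.prob Y {..<x})"
    by (rule measure_pmf.integrable_const_bound[where B = 1]) auto
  moreover have "integrable (measure_pmf X) (pmf Y)"
    by (rule measure_pmf.integrable_const_bound[where B = 1]) (auto simp: pmf_le_1)
  ultimately show ?thesis
    unfolding win_share_def by simp
qed

lemma payoff_eq_win_share: "payoff v X Y = v * measure_pmf.expectation X (win_share Y) - mean X"
  unfolding payoff_def expectation_win_share by (simp add: algebra_simps)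

lemma expectation_win_share_swap:
  "measure_pmf.expectation X (win_share Y) + measure_pmf.expectation Y (win_share X) = 1"
proof -
  let ?P = "measure_pmf.prob (pair_pmf X Y)"
  have swap: "measure_pmf.prob (pair_pmf Y X) A = ?P ((\<lambda>(x, y). (y, x)) -` A)" for A
    by (subst pair_commute_pmf) (simp add: measure_map_pmf)
  have "(\<lambda>(x, y). (y, x)) -` {(x, y). y < x} = {(x, y). x < (y :: nat)}"
    and "(\<lambda>(x, y). (y, x)) -` {(x, y). x = y} = {(x, y). x = (y :: nat)}"
    by auto
  moreover have "?P ({(x, y). y < x} \<union> {(x, y). x < y} \<union> {(x, y). x = y}) =
      ?P {(x, y). y < x} + ?P {(x, y). x < y} + ?P {(x, y). x = y}"
    by (subst measure_pmf.finite_measure_Union; auto)+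
  moreover have "{(x, y). y < x} \<union> {(x, y). x < y} \<union> {(x, y). x = y} = (UNIV :: (nat \<times> nat) set)"
    by auto
  ultimately show ?thesis
    unfolding expectation_win_share swap by simp
qed

lemma strategy_finite: "finite (set_pmf X) \<Longrightarrow> strategy X"
  unfolding strategy_def by (rule integrable_measure_pmf_finite)

lemma payoff_return_pmf: "payoff v (return_pmf k) Y = v * win_share Y k - real k"
  by (simp add: payoff_eq_win_share mean_def)

lemma integrable_payoff_return_pmf:
  "strategy X \<Longrightarrow> integrable (measure_pmf X) (\<lambda>k. payoff v (return_pmf k) Y)"
  unfolding strategy_def payoff_return_pmf
  by (intro Bochner_Integration.integrable_diff integrable_mult_right integrable_win_share)

lemma payoff_eq_expectation_return_pmf:
  "strategy X \<Longrightarrow> payoff v X Y = measure_pmf.expectation X (\<lambda>k. payoff v (return_pmf k) Y)"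
  unfolding payoff_return_pmf unfolding strategy_def payoff_eq_win_share mean_def
  by (subst Bochner_Integration.integral_diff) (auto intro: integrable_win_share)

lemma eq_on_set_pmf_if_expectation_ge_bound:
  fixes f :: "'a \<Rightarrow> real"
  assumes f: "integrable (measure_pmf X) f" and le: "\<And>x. f x \<le> u"
    and ge: "u \<le> measure_pmf.expectation X f" and x: "x \<in> set_pmf X"
  shows "f x = u"
proof -
  have gap: "integrable (measure_pmf X) (\<lambda>x. u - f x)"
    using f by simp
  have "measure_pmf.expectation X (\<lambda>x. u - f x) = u - measure_pmf.expectation X f"
    using f by (simp add: Bochner_Integration.integral_diff)
  moreover have "0 \<le> measure_pmf.expectation X (\<lambda>x. u - f x)"
    using le by (simp add: integral_nonneg_AE)
  ultimately have "measure_pmf.expectation X (\<lambda>x. u - f x) = 0"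
    using ge by linarith
  then have "AE x in measure_pmf X. u - f x = 0"
    using integral_nonneg_eq_0_iff_AE[OF gap] le by simp
  then show ?thesis
    using x by (simp add: AE_measure_pmf_iff)
qed

lemma pmf_eqI_finite_support:
  assumes S: "finite S" "set_pmf Z \<subseteq> S" and eq: "\<And>k. k \<in> S \<Longrightarrow> pmf Y k = pmf Z k"
  shows "Y = Z"
proof -
  have "measure_pmf.prob Y S = measure_pmf.prob Z S"
    using S eq by (simp add: measure_measure_pmf_finite)
  also have "\<dots> = 1"
    using S by (simp add: measure_pmf.prob_eq_1 AE_measure_pmf_iff subset_eq)
  finally have "set_pmf Y \<subseteq> S"
    by (simp add: measure_pmf.prob_eq_1 AE_measure_pmf_iff subset_iff)
  then have "pmf Y k = pmf Z k" for k
    using S(2) eq by (cases "k \<in> S") (metis set_pmf_iff subsetD)+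
  then show ?thesis
    by (rule pmf_eqI)
qed

lemma pmf_eq_if_win_share_eq:
  assumes Z: "set_pmf Z \<subseteq> {..n}" and eq: "\<And>k. k \<le> n \<Longrightarrow> win_share Y k = win_share Z k"
  shows "Y = Z"
proof (rule pmf_eqI_finite_support[OF finite_atMost Z])
  fix k assume "k \<in> {..n}"
  then show "pmf Y k = pmf Z k"
  proof (induction k)
    case 0
    then show ?case using eq[of 0] by (simp add: win_share_0)
  next
    case (Suc k)
    then show ?case using eq[of k] eq[of "Suc k"] by (simp add: win_share_Suc)
  qed
qed

lemma prob_mix:
  "0 \<le> l \<Longrightarrow> l \<le> 1 \<Longrightarrow>
   measure_pmf.prob (mix l A B) S = l * measure_pmf.prob A S + (1 - l) * measure_pmf.prob B S"
  unfolding mix_def prob_bind_pmf by (simp add: algebra_simps)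

lemma win_share_mix:
  "0 \<le> l \<Longrightarrow> l \<le> 1 \<Longrightarrow> win_share (mix l A B) k = l * win_share A k + (1 - l) * win_share B k"
  unfolding win_share_def measure_pmf_single[symmetric] by (simp add: prob_mix field_simps)

lemma set_pmf_mix: "set_pmf (mix l A B) \<subseteq> set_pmf A \<union> set_pmf B"
  unfolding mix_def by (auto split: if_splits)

lemma U_E_eq_pmf_of_set: "U_E m = pmf_of_set ((\<lambda>k. 2 * k) ` {..m})"
  unfolding U_E_def by (rule arg_cong[where f = pmf_of_set]) auto

lemma U_O_eq_pmf_of_set: "U_O m = pmf_of_set ((\<lambda>k. 2 * k + 1) ` {..<m})"
  unfolding U_O_def by (rule arg_cong[where f = pmf_of_set]) auto

lemma set_pmf_U_E: "set_pmf (U_E m) = {n. even n \<and> n \<le> 2 * m}"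
  unfolding U_E_eq_pmf_of_set by (auto elim!: evenE)

lemma set_pmf_U_O: "0 < m \<Longrightarrow> set_pmf (U_O m) = {n. odd n \<and> n < 2 * m}"
  unfolding U_O_eq_pmf_of_set by (auto simp: lessThan_empty_iff elim!: oddE)

lemma pmf_U_E: "pmf (U_E m) n = (if even n \<and> n \<le> 2 * m then 1 / (real m + 1) else 0)"
  unfolding U_E_eq_pmf_of_set by (auto simp: card_image inj_on_def indicator_def elim!: evenE)

lemma pmf_U_O: "0 < m \<Longrightarrow> pmf (U_O m) n = (if odd n \<and> n < 2 * m then 1 / real m else 0)"
  unfolding U_O_eq_pmf_of_set
  by (auto simp: lessThan_empty_iff card_image inj_on_def indicator_def elim!: oddE)

lemma pmf_U_E_add_Suc:
  "pmf (U_E m) k + pmf (U_E m) (Suc k) = (if k \<le> 2 * m then 1 / (real m + 1) else 0)"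
proof (cases "even k")
  case False
  then have "k \<le> 2 * m \<longleftrightarrow> Suc k \<le> 2 * m" by presburger
  with False show ?thesis by (simp add: pmf_U_E)
qed (simp add: pmf_U_E)

lemma pmf_U_O_add_Suc:
  "0 < m \<Longrightarrow> pmf (U_O m) k + pmf (U_O m) (Suc k) = (if k < 2 * m then 1 / real m else 0)"
proof (cases "even k")
  case True
  then have "k < 2 * m \<longleftrightarrow> Suc k < 2 * m" by presburger
  with True show "0 < m \<Longrightarrow> ?thesis" by (simp add: pmf_U_O)
qed (simp add: pmf_U_O)

lemma strategy_U_E: "strategy (U_E m)"
  by (rule strategy_finite) (simp add: U_E_eq_pmf_of_set)

lemma strategy_U_O: "0 < m \<Longrightarrow> strategy (U_O m)"
  by (rule strategy_finite) (simp add: U_O_eq_pmf_of_set lessThan_empty_iff)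

lemma mean_U_E: "mean (U_E m) = real m"
proof -
  have "(\<Sum>k\<le>m. 2 * real k) = real m * (real m + 1)"
    by (induction m) (simp_all add: algebra_simps)
  then show ?thesis
    unfolding mean_def U_E_eq_pmf_of_set
    by (simp add: integral_pmf_of_set sum.reindex card_image inj_on_def field_simps)
qed

lemma mean_U_O: "0 < m \<Longrightarrow> mean (U_O m) = real m"
proof -
  have "(\<Sum>k<m. 1 + 2 * real k) = real m * real m"
    by (induction m) (simp_all add: algebra_simps)
  then show "0 < m \<Longrightarrow> ?thesis"
    unfolding mean_def U_O_eq_pmf_of_set
    by (simp add: integral_pmf_of_set sum.reindex card_image inj_on_def lessThan_empty_iff)
qed

lemma win_share_staircase:
  fixes d N :: nat
  assumes "d \<le> N" "0 < N" and "pmf Y 0 = 2 * d / N"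
    and "\<And>k. pmf Y k + pmf Y (Suc k) = (if k + d < N then 2 / N else 0)"
  shows "win_share Y k = min 1 ((real k + d) / N)"
proof (induction k)
  case 0
  then show ?case using assms by (simp add: win_share_0)
next
  case (Suc k)
  then show ?case using assms by (simp add: win_share_Suc field_simps min_def)
qed

lemma win_share_U_E: "win_share (U_E m) k = min 1 ((real k + 1) / (2 * real m + 2))"
proof -
  have "win_share (U_E m) k = min 1 ((real k + real 1) / real (2 * m + 2))"
  proof (rule win_share_staircase)
    fix k
    show "pmf (U_E m) k + pmf (U_E m) (Suc k) = (if k + 1 < 2 * m + 2 then 2 / real (2 * m + 2) else 0)"
      by (simp add: pmf_U_E_add_Suc field_simps)
  qed (simp_all add: pmf_U_E field_simps)
  then show ?thesis by (simp add: add.commute)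
qed

lemma win_share_U_O:
  assumes "0 < m" shows "win_share (U_O m) k = min 1 (real k / (2 * real m))"
proof -
  have "win_share (U_O m) k = min 1 ((real k + real 0) / real (2 * m))"
  proof (rule win_share_staircase)
    fix k
    show "pmf (U_O m) k + pmf (U_O m) (Suc k) = (if k + 0 < 2 * m then 2 / real (2 * m) else 0)"
      using assms by (simp add: pmf_U_O_add_Suc)
  qed (use assms in \<open>simp_all add: pmf_U_O\<close>)
  then show ?thesis by simp
qed

lemma expectation_win_share_ge:
  assumes Y: "strategy Y" and A: "\<And>k. win_share A k \<le> c * real k + d"
  shows "1 - c * mean Y - d \<le> measure_pmf.expectation A (win_share Y)"
proof -
  have "measure_pmf.expectation Y (win_share A) \<le> measure_pmf.expectation Y (\<lambda>k. c * real k + d)"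
    using Y A unfolding strategy_def by (intro integral_mono integrable_win_share) auto
  also have "\<dots> = c * mean Y + d"
    using Y unfolding strategy_def mean_def by simp
  finally show ?thesis
    using expectation_win_share_swap[of A Y] by linarith
qed

lemma payoff_U_E_ge:
  assumes "strategy Y" "0 \<le> v"
  shows "v * (1 - (mean Y + 1) / (2 * real m + 2)) - real m \<le> payoff v (U_E m) Y"
proof -
  have "1 - 1 / (2 * real m + 2) * mean Y - 1 / (2 * real m + 2) \<le>
        measure_pmf.expectation (U_E m) (win_share Y)"
    by (rule expectation_win_share_ge[OF assms(1)])
       (simp add: win_share_U_E add_divide_distrib[symmetric] min_le_iff_disj)
  then have "1 - (mean Y + 1) / (2 * real m + 2) \<le> measure_pmf.expectation (U_E m) (win_share Y)"
    by (simp add: add_divide_distrib)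
  then show ?thesis
    unfolding payoff_eq_win_share mean_U_E using assms(2) by (simp add: mult_left_mono)
qed

lemma payoff_U_O_ge:
  assumes "strategy Y" "0 \<le> v" "0 < m"
  shows "v * (1 - mean Y / (2 * real m)) - real m \<le> payoff v (U_O m) Y"
proof -
  have "1 - 1 / (2 * real m) * mean Y - 0 \<le> measure_pmf.expectation (U_O m) (win_share Y)"
    by (rule expectation_win_share_ge[OF assms(1)]) (use assms(3) in \<open>simp add: win_share_U_O\<close>)
  then have "1 - mean Y / (2 * real m) \<le> measure_pmf.expectation (U_O m) (win_share Y)"
    by simp
  then show ?thesis
    unfolding payoff_eq_win_share mean_U_O[OF assms(3)] using assms(2) by (simp add: mult_left_mono)
qed

text \<open>If x < a, the first bound forces v > M and the second v < M.\<close>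

lemma ge_if_scaled_bounds:
  fixes v M x a :: real
  assumes "0 < v" "0 < M" "0 < a" "a < 1"
    and lower: "a * M \<le> v * x" and upper: "v * (1 - x) \<le> (1 - a) * M"
  shows "a \<le> x" and "x = a \<Longrightarrow> v = M"
proof -
  show "a \<le> x"
  proof (cases "v \<le> M")
    case True
    then have "a * v \<le> a * M"
      using \<open>0 < a\<close> by simp
    then have "v * a \<le> v * x"
      using lower by (simp add: mult.commute)
    then show ?thesis using \<open>0 < v\<close> by simp
  next
    case False
    then have "(1 - a) * M \<le> (1 - a) * v"
      using \<open>a < 1\<close> by simp
    then have "v * (1 - x) \<le> v * (1 - a)"
      using upper by (simp add: mult.commute)
    then show ?thesis using \<open>0 < v\<close> by simp
  qed
next
  assume "x = a"
  then have "M \<le> v" and "v \<le> M"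
    using lower upper \<open>0 < a\<close> \<open>a < 1\<close> by (simp_all add: mult.commute)
  then show "v = M" by simp
qed

lemma share_lower_bound_if_no_profitable_deviation:
  assumes "0 < v" "0 < a" "a < 1" and Y: "strategy Y"
    and mX: "mean X = real m + a" and mY: "mean Y = real m + b"
    and E: "payoff v (U_E m) Y \<le> payoff v X Y" and O: "payoff v (U_O (Suc m)) Y \<le> payoff v X Y"
  shows "real m + 1 + a - b \<le> (2 * real m + 2) * measure_pmf.expectation X (win_share Y)"
    and "(2 * real m + 2) * measure_pmf.expectation X (win_share Y) = real m + 1 + a - b \<Longrightarrow>
         v = 2 * real m + 2"
proof -
  define M where "M = 2 * real m + 2"
  define x where "x = M * measure_pmf.expectation X (win_share Y) - (real m + 1) + b"
  have pX: "payoff v X Y = v * measure_pmf.expectation X (win_share Y) - (real m + a)"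
    unfolding payoff_eq_win_share mX ..
  have "v * (1 - (real m + b + 1) / M) - real m \<le> v * measure_pmf.expectation X (win_share Y) - (real m + a)"
    using payoff_U_E_ge[OF Y, of v m] E \<open>0 < v\<close> unfolding pX mY M_def by simp
  then have "a * M \<le> v * x"
    unfolding x_def M_def by (simp add: field_simps)
  moreover
  have "v * (1 - (real m + b) / M) - (real m + 1) \<le> v * measure_pmf.expectation X (win_share Y) - (real m + a)"
    using payoff_U_O_ge[OF Y, of v "Suc m"] O \<open>0 < v\<close> unfolding pX mY M_def by (simp add: algebra_simps)
  then have "v * (1 - x) \<le> (1 - a) * M"
    unfolding x_def M_def by (simp add: field_simps)
  moreover have "0 < M"
    unfolding M_def by simp
  ultimately have "a \<le> x" and "x = a \<Longrightarrow> v = M"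
    using ge_if_scaled_bounds \<open>0 < v\<close> \<open>0 < a\<close> \<open>a < 1\<close> by blast+
  then show "real m + 1 + a - b \<le> (2 * real m + 2) * measure_pmf.expectation X (win_share Y)"
    and "(2 * real m + 2) * measure_pmf.expectation X (win_share Y) = real m + 1 + a - b \<Longrightarrow>
         v = 2 * real m + 2"
    unfolding x_def M_def by linarith+
qed

lemma nash_valuations_and_payoffs:
  assumes "0 < v1" "0 < v2" "0 < \<alpha>" "\<alpha> < 1" "0 < \<beta>" "\<beta> < 1"
    and mX: "mean X = real m + \<alpha>" and mY: "mean Y = real m + \<beta>" and nash: "nash v1 v2 X Y"
  shows "v1 = 2 * real m + 2 \<and> v2 = 2 * real m + 2 \<and> payoff v1 X Y = 1 - \<beta> \<and> payoff v2 Y X = 1 - \<alpha>"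
proof -
  let ?s = "(2 * real m + 2) * measure_pmf.expectation X (win_share Y)"
  let ?t = "(2 * real m + 2) * measure_pmf.expectation Y (win_share X)"
  have X: "strategy X" and Y: "strategy Y"
    and dev1: "\<And>X'. strategy X' \<Longrightarrow> payoff v1 X' Y \<le> payoff v1 X Y"
    and dev2: "\<And>Y'. strategy Y' \<Longrightarrow> payoff v2 Y' X \<le> payoff v2 Y X"
    using nash unfolding nash_def by auto
  note s = share_lower_bound_if_no_profitable_deviation[OF \<open>0 < v1\<close> \<open>0 < \<alpha>\<close> \<open>\<alpha> < 1\<close> Y mX mY
      dev1[OF strategy_U_E] dev1[OF strategy_U_O]]
  note t = share_lower_bound_if_no_profitable_deviation[OF \<open>0 < v2\<close> \<open>0 < \<beta>\<close> \<open>\<beta> < 1\<close> X mY mX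
      dev2[OF strategy_U_E] dev2[OF strategy_U_O]]
  have "?s + ?t = 2 * real m + 2"
    using expectation_win_share_swap[of X Y] by (simp add: distrib_left[symmetric])
  then have s_eq: "?s = real m + 1 + \<alpha> - \<beta>" and t_eq: "?t = real m + 1 + \<beta> - \<alpha>"
    using s(1) t(1) by linarith+
  then have "v1 = 2 * real m + 2" and "v2 = 2 * real m + 2"
    using s(2) t(2) by simp_all
  with s_eq t_eq show ?thesis
    unfolding payoff_eq_win_share mX mY by simp
qed

lemma set_pmf_mix_U_E_U_O: "set_pmf (mix l (U_E m) (U_O (Suc m))) \<subseteq> {..2 * m + 1}"
  using set_pmf_mix[of l "U_E m" "U_O (Suc m)"] by (auto simp: set_pmf_U_E set_pmf_U_O)

lemma strategy_mix_U_E_U_O: "strategy (mix l (U_E m) (U_O (Suc m)))"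
  by (rule strategy_finite, rule finite_subset[OF set_pmf_mix_U_E_U_O]) simp

lemma payoff_return_pmf_mix:
  assumes "0 \<le> l" "l \<le> 1"
  shows "payoff (2 * real m + 2) (return_pmf k) (mix l (U_E m) (U_O (Suc m))) = min l (2 * real m + 2 - real k)"
proof (cases "k \<le> 2 * m + 1")
  case True
  have "2 * real m + 2 \<noteq> 0"
    by simp
  moreover have "win_share (U_E m) k = (real k + 1) / (2 * real m + 2)"
    and "win_share (U_O (Suc m)) k = real k / (2 * real m + 2)"
    using True by (simp_all add: win_share_U_E win_share_U_O)
  ultimately show ?thesis
    using True assms by (simp add: payoff_return_pmf win_share_mix field_simps)
next
  case False
  then show ?thesis
    using assms by (simp add: payoff_return_pmf win_share_mix win_share_U_E win_share_U_O)
qed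

lemma payoff_against_mix_le:
  assumes "0 \<le> l" "l \<le> 1" "strategy X"
  shows "payoff (2 * real m + 2) X (mix l (U_E m) (U_O (Suc m))) \<le> l"
proof -
  have "payoff (2 * real m + 2) X (mix l (U_E m) (U_O (Suc m))) \<le> measure_pmf.expectation X (\<lambda>_. l)"
    unfolding payoff_eq_expectation_return_pmf[OF assms(3)]
    by (intro integral_mono integrable_payoff_return_pmf assms(3))
       (simp_all add: payoff_return_pmf_mix assms(1,2))
  then show ?thesis by simp
qed

lemma payoff_against_mix_eq:
  assumes "0 \<le> l" "l \<le> 1" "strategy X" "set_pmf X \<subseteq> {..2 * m + 1}"
  shows "payoff (2 * real m + 2) X (mix l (U_E m) (U_O (Suc m))) = l"
proof -
  have "payoff (2 * real m + 2) X (mix l (U_E m) (U_O (Suc m))) = measure_pmf.expectation X (\<lambda>_. l)"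
    unfolding payoff_eq_expectation_return_pmf[OF assms(3)]
    using assms by (intro integral_cong_AE) (auto simp: AE_measure_pmf_iff payoff_return_pmf_mix subset_eq)
  then show ?thesis by simp
qed

lemma nash_mix_U_E_U_O:
  fixes m :: nat
  assumes "0 \<le> l1" "l1 \<le> 1" "0 \<le> l2" "l2 \<le> 1"
  defines "X \<equiv> mix l1 (U_E m) (U_O (Suc m))" and "Y \<equiv> mix l2 (U_E m) (U_O (Suc m))"
  shows "nash (2 * real m + 2) (2 * real m + 2) X Y"
proof -
  have X: "strategy X" and Y: "strategy Y"
    unfolding X_def Y_def by (rule strategy_mix_U_E_U_O)+
  have "payoff (2 * real m + 2) X Y = l2" and "payoff (2 * real m + 2) Y X = l1"
    unfolding X_def Y_def using assms(1-4)
    by (intro payoff_against_mix_eq strategy_mix_U_E_U_O set_pmf_mix_U_E_U_O; simp)+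
  then show ?thesis
    unfolding nash_def using X Y payoff_against_mix_le assms(1-4) unfolding X_def Y_def by simp
qed

lemma payoff_return_pmf_eq_on_support:
  assumes A: "strategy A" "k \<in> set_pmf A" and best: "\<And>k. payoff v (return_pmf k) Y \<le> u"
    and "u \<le> payoff v A Y"
  shows "payoff v (return_pmf k) Y = u"
proof (rule eq_on_set_pmf_if_expectation_ge_bound[where f = "\<lambda>k. payoff v (return_pmf k) Y"])
  show "integrable (measure_pmf A) (\<lambda>k. payoff v (return_pmf k) Y)"
    by (rule integrable_payoff_return_pmf[OF A(1)])
  show "u \<le> measure_pmf.expectation A (\<lambda>k. payoff v (return_pmf k) Y)"
    using \<open>u \<le> payoff v A Y\<close> unfolding payoff_eq_expectation_return_pmf[OF A(1)] .
qed (use A best in auto)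

lemma payoff_U_E_U_O_ge_at_critical_valuation:
  assumes Y: "strategy Y" "mean Y = real m + b"
  shows "1 - b \<le> payoff (2 * real m + 2) (U_E m) Y"
    and "1 - b \<le> payoff (2 * real m + 2) (U_O (Suc m)) Y"
proof -
  have M: "0 \<le> 2 * real m + 2"
    by simp
  have E: "(2 * real m + 2) * (1 - (mean Y + 1) / (2 * real m + 2)) - real m = 1 - b"
    and O: "(2 * real m + 2) * (1 - mean Y / (2 * real (Suc m))) - real (Suc m) = 1 - b"
    using Y(2) by (simp_all add: field_simps)
  show "1 - b \<le> payoff (2 * real m + 2) (U_E m) Y"
    using payoff_U_E_ge[OF Y(1) M, of m] unfolding E .
  show "1 - b \<le> payoff (2 * real m + 2) (U_O (Suc m)) Y"
    using payoff_U_O_ge[OF Y(1) M zero_less_Suc[of m]] unfolding O .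
qed

lemma opponent_eq_mix_if_best_reply_value:
  assumes Y: "strategy Y" "mean Y = real m + b" "0 \<le> b" "b \<le> 1"
    and best: "\<And>X. strategy X \<Longrightarrow> payoff (2 * real m + 2) X Y \<le> 1 - b"
  shows "Y = mix (1 - b) (U_E m) (U_O (Suc m))"
proof -
  define M where "M = 2 * real m + 2"
  define Z where "Z = mix (1 - b) (U_E m) (U_O (Suc m))"
  have pure_le: "payoff M (return_pmf k) Y \<le> 1 - b" for k
    unfolding M_def by (rule best) (simp add: strategy_finite)
  note deviations = payoff_U_E_U_O_ge_at_critical_valuation[OF Y(1,2), folded M_def]
  have Y_share: "M * win_share Y k - real k = 1 - b" if "k \<le> 2 * m + 1" for k
  proof -
    have "k \<in> set_pmf (U_E m) \<or> k \<in> set_pmf (U_O (Suc m))"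
      using that by (auto simp: set_pmf_U_E set_pmf_U_O)
    then have "payoff M (return_pmf k) Y = 1 - b"
    proof
      assume "k \<in> set_pmf (U_E m)"
      then show ?thesis
        by (rule payoff_return_pmf_eq_on_support[OF strategy_U_E _ pure_le deviations(1)])
    next
      assume "k \<in> set_pmf (U_O (Suc m))"
      then show ?thesis
        by (rule payoff_return_pmf_eq_on_support[OF strategy_U_O[OF zero_less_Suc] _ pure_le deviations(2)])
    qed
    then show ?thesis
      unfolding payoff_return_pmf .
  qed
  have Z_share: "M * win_share Z k - real k = 1 - b" if "k \<le> 2 * m + 1" for k
    using that payoff_return_pmf_mix[of "1 - b" m k] Y(3,4)
    unfolding M_def Z_def payoff_return_pmf by (simp add: min_def)
  have "win_share Y k = win_share Z k" if "k \<le> 2 * m + 1" for k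
  proof -
    have "M * win_share Y k = M * win_share Z k"
      using Y_share[OF that] Z_share[OF that] by linarith
    moreover have "M \<noteq> 0"
      unfolding M_def by simp
    ultimately show ?thesis
      by simp
  qed
  then show ?thesis
    unfolding Z_def by (rule pmf_eq_if_win_share_eq[OF set_pmf_mix_U_E_U_O])
qed

lemma nash_eq_mix_U_E_U_O:
  assumes "0 < v1" "0 < v2" "0 < \<alpha>" "\<alpha> < 1" "0 < \<beta>" "\<beta> < 1"
    and mX: "mean X = real m + \<alpha>" and mY: "mean Y = real m + \<beta>" and nash: "nash v1 v2 X Y"
  shows "X = mix (1 - \<alpha>) (U_E m) (U_O (Suc m)) \<and> Y = mix (1 - \<beta>) (U_E m) (U_O (Suc m))"
proof
  have X: "strategy X" and Y: "strategy Y"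
    and dev1: "\<And>X'. strategy X' \<Longrightarrow> payoff v1 X' Y \<le> payoff v1 X Y"
    and dev2: "\<And>Y'. strategy Y' \<Longrightarrow> payoff v2 Y' X \<le> payoff v2 Y X"
    using nash unfolding nash_def by auto
  have v: "v1 = 2 * real m + 2" "v2 = 2 * real m + 2"
    and p: "payoff v1 X Y = 1 - \<beta>" "payoff v2 Y X = 1 - \<alpha>"
    using nash_valuations_and_payoffs[OF assms] by auto
  show "X = mix (1 - \<alpha>) (U_E m) (U_O (Suc m))"
  proof (rule opponent_eq_mix_if_best_reply_value[OF X mX])
    fix Y' assume "strategy Y'"
    then show "payoff (2 * real m + 2) Y' X \<le> 1 - \<alpha>"
      using dev2[OF \<open>strategy Y'\<close>] p(2) unfolding v(2) by linarith
  qed (use assms(3,4) in auto)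
  show "Y = mix (1 - \<beta>) (U_E m) (U_O (Suc m))"
  proof (rule opponent_eq_mix_if_best_reply_value[OF Y mY])
    fix X' assume "strategy X'"
    then show "payoff (2 * real m + 2) X' Y \<le> 1 - \<beta>"
      using dev1[OF \<open>strategy X'\<close>] p(1) unfolding v(1) by linarith
  qed (use assms(5,6) in auto)
qed

theorem proposition3:
  fixes v1 v2 \<alpha> \<beta> :: real and m :: nat and X Y :: "nat pmf"
  assumes "v1 \<ge> v2" and "v2 > 0"
    and "0 < \<beta>" and "\<beta> \<le> \<alpha>" and "\<alpha> < 1"
    and "strategy X" and "strategy Y"
    and "mean X = real m + \<alpha>" and "mean Y = real m + \<beta>"
  shows "(nash v1 v2 X Y \<longleftrightarrow>
            (v1 / 2 = real m + 1 \<and> v2 / 2 = real m + 1 \<and>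
             X = mix (1 - \<alpha>) (U_E m) (U_O (m + 1)) \<and>
             Y = mix (1 - \<beta>) (U_E m) (U_O (m + 1))))
         \<and> (nash v1 v2 X Y \<longrightarrow>
              payoff v1 X Y = 1 - \<beta> \<and> payoff v2 Y X = 1 - \<alpha>)"
proof -
  define M where "M = 2 * real m + 2"
  have half: "v / 2 = real m + 1 \<longleftrightarrow> v = M" for v :: real
    unfolding M_def by linarith
  have bounds: "0 < v1" "0 < \<alpha>" "\<beta> < 1"
    using assms(1-5) by linarith+
  note assms' = bounds(1) assms(2) bounds(2) assms(5,3) bounds(3) assms(8,9)
  have necessary: "v1 = M \<and> v2 = M \<and> X = mix (1 - \<alpha>) (U_E m) (U_O (Suc m)) \<and>
      Y = mix (1 - \<beta>) (U_E m) (U_O (Suc m)) \<and> payoff v1 X Y = 1 - \<beta> \<and> payoff v2 Y X = 1 - \<alpha>"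
    if "nash v1 v2 X Y"
    using nash_valuations_and_payoffs[OF assms' that] nash_eq_mix_U_E_U_O[OF assms' that]
    unfolding M_def by (elim conjE) (intro conjI; assumption)
  have sufficient: "nash v1 v2 X Y"
    if "v1 = M" "v2 = M"
      "X = mix (1 - \<alpha>) (U_E m) (U_O (Suc m))" "Y = mix (1 - \<beta>) (U_E m) (U_O (Suc m))"
    using nash_mix_U_E_U_O[of "1 - \<alpha>" "1 - \<beta>" m] that bounds assms(3,5) unfolding M_def by simp
  show ?thesis
    unfolding half Suc_eq_plus1[symmetric] using necessary sufficient by blast
qed

end
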